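(* Let $\Gamma$ be a connected finite simple graph and let $\mathcal{R}$ be an equivalence relation on $V(\Gamma)$ with distinct equivalence classes $C_1,\dots,C_k$, where $|C_i|=n_i$ for $1\le i\le k$. Let $\Gamma^{\mathcal{R}}$ be the $\mathcal{R}$-super $\Gamma$ graph. Then all vertices of $C_i$ have the same degree in $\Gamma^{\mathcal{R}}$; call it $d_i$. Call $C_i$ and $C_j$ ($i\neq j$) adjacent if there exist $x\in C_i$, $y\in C_j$ adjacent in $\Gamma$. Let $N$ be the $k\times k$ matrix with $N_{ii}=(n_i-1)d_i\sqrt{2}$ and, for $i\ne j$, $N_{ij}=n_j\sqrt{d_i^2+d_j^2}$ if $C_i$ and $C_j$ are adjacent and $N_{ij}=0$ otherwise. Then the characteristic polynomial of the Sombor matrix of $\Gamma^{\mathcal{R}}$ is \[\chi(S(\Gamma^{\mathcal{R}}),x)=\chi(N,x)\prod_{i=1}^{k}\left(x+d_i\sqrt{2}\right)^{n_i-1},\] where $\chi(M,x)=\det(xI-M)$.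
   Context: All graphs are finite, simple and undirected. For a graph $\Gamma$ with vertices $u_1,\dots,u_m$, the Sombor matrix $S(\Gamma)$ is the $m\times m$ matrix whose $(i,j)$ entry is $\sqrt{\deg(u_i)^2+\deg(u_j)^2}$ if $u_i$ and $u_j$ are adjacent and $0$ otherwise (so the diagonal is zero). Given a graph $\Gamma$ and an equivalence relation $\mathcal{R}$ on $V(\Gamma)$, the $\mathcal{R}$-super $\Gamma$ graph $\Gamma^{\mathcal{R}}$ has vertex set $V(\Gamma)$, and two distinct vertices $x,y$ are adjacent iff either $x,y$ lie in the same $\mathcal{R}$-class or there exist $x'\in[x]_{\mathcal{R}}$ and $y'\in[y]_{\mathcal{R}}$ with $x'$ adjacent to $y'$ in $\Gamma$. *)

theory Defs
  imports "Jordan_Normal_Form.Char_Poly"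
begin

definition simple_graph :: "'a set \<Rightarrow> ('a \<Rightarrow> 'a \<Rightarrow> bool) \<Rightarrow> bool" where
  "simple_graph V E \<longleftrightarrow> finite V \<and> (\<forall>x y. E x y \<longrightarrow> x \<in> V \<and> y \<in> V)
     \<and> (\<forall>x y. E x y \<longrightarrow> E y x) \<and> (\<forall>x. \<not> E x x)"

definition connected_graph :: "'a set \<Rightarrow> ('a \<Rightarrow> 'a \<Rightarrow> bool) \<Rightarrow> bool" where
  "connected_graph V E \<longleftrightarrow> V \<noteq> {} \<and> (\<forall>x\<in>V. \<forall>y\<in>V. E\<^sup>*\<^sup>* x y)"

definition degree :: "'a set \<Rightarrow> ('a \<Rightarrow> 'a \<Rightarrow> bool) \<Rightarrow> 'a \<Rightarrow> nat" where
  "degree V E x = card {y \<in> V. E x y}"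

definition super_adj :: "('a \<times> 'a) set \<Rightarrow> ('a \<Rightarrow> 'a \<Rightarrow> bool) \<Rightarrow> 'a \<Rightarrow> 'a \<Rightarrow> bool" where
  "super_adj R E x y \<longleftrightarrow> x \<noteq> y \<and>
     ((x, y) \<in> R \<or> (\<exists>x' y'. (x, x') \<in> R \<and> (y, y') \<in> R \<and> E x' y'))"

definition sombor_matrix :: "'a set \<Rightarrow> ('a \<Rightarrow> 'a \<Rightarrow> bool) \<Rightarrow> 'a list \<Rightarrow> real mat" where
  "sombor_matrix V E vs = mat (length vs) (length vs) (\<lambda>(i, j).
     if E (vs ! i) (vs ! j)
     then sqrt (real (degree V E (vs ! i)) ^ 2 + real (degree V E (vs ! j)) ^ 2)
     else 0)"

definition classes_adj :: "('a \<Rightarrow> 'a \<Rightarrow> bool) \<Rightarrow> 'a set \<Rightarrow> 'a set \<Rightarrow> bool" where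
  "classes_adj E C D \<longleftrightarrow> (\<exists>x\<in>C. \<exists>y\<in>D. E x y)"

definition quot_matrix :: "('a \<Rightarrow> 'a \<Rightarrow> bool) \<Rightarrow> 'a set list \<Rightarrow> (nat \<Rightarrow> real) \<Rightarrow> real mat" where
  "quot_matrix E Cs d = mat (length Cs) (length Cs) (\<lambda>(i, j).
     if i = j then (real (card (Cs ! i)) - 1) * d i * sqrt 2
     else if classes_adj E (Cs ! i) (Cs ! j)
       then real (card (Cs ! j)) * sqrt (d i ^ 2 + d j ^ 2)
       else 0)"

end

theory Submission
  imports Defs
begin

(* Vertices in one R-class have the same closed neighbourhood in the super graph, hence the same
   degree d_i, so the Sombor matrix S of the super graph is the blow-up
   S_pq = B_(c p)(c q) + [p = q] a_(c p) of a k x k class weight matrix B along the class map c,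
   with a_i = - sqrt 2 d_i.  Let Q be the 0/1 class-indicator matrix and P_iq = B_(i, c q).  Then
   xI - S = X - QP and xI - N = W - PQ for the diagonal matrices X = diag (x - a_(c p)) and
   W = diag (x - a_i), and XQ = QW.  Multiplying the block matrix [X Q; P I] by [I -Q; 0 W] gives
   det (X - QP) det W = det X det (W - PQ), and det X = det W * prod_i (x - a_i)^(n_i - 1). *)

lemma mult_diagonal_mat_right:
  fixes A :: "'a :: semiring_0 mat"
  assumes A: "A \<in> carrier_mat n m"
  shows "A * mat m m (\<lambda>(i, j). if i = j then g i else 0) = mat n m (\<lambda>(i, j). A $$ (i, j) * g j)"
    (is "A * ?D = ?M")
proof (rule eq_matI)
  fix i j assume "i < dim_row ?M" "j < dim_col ?M"
  then have ij: "i < n" "j < m" by auto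
  have "(\<Sum>l = 0..<m. A $$ (i, l) * (if l = j then g l else 0))
      = (\<Sum>l = 0..<m. if l = j then A $$ (i, l) * g l else 0)"
    by (rule sum.cong) auto
  then show "(A * ?D) $$ (i, j) = ?M $$ (i, j)"
    using A ij by (simp add: scalar_prod_def)
qed (use A in auto)

lemma mult_diagonal_mat_left:
  fixes A :: "'a :: semiring_0 mat"
  assumes A: "A \<in> carrier_mat n m"
  shows "mat n n (\<lambda>(i, j). if i = j then g i else 0) * A = mat n m (\<lambda>(i, j). g i * A $$ (i, j))"
    (is "?D * A = ?M")
proof (rule eq_matI)
  fix i j assume "i < dim_row ?M" "j < dim_col ?M"
  then have ij: "i < n" "j < m" by auto
  have "(\<Sum>l = 0..<n. (if i = l then g i else 0) * A $$ (l, j))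
      = (\<Sum>l = 0..<n. if i = l then g i * A $$ (l, j) else 0)"
    by (rule sum.cong) auto
  then show "(?D * A) $$ (i, j) = ?M $$ (i, j)"
    using A ij by (simp add: scalar_prod_def)
qed (use A in auto)

lemma det_diagonal_mat:
  "det (mat n n (\<lambda>(i, j). if i = j then g i else 0)) = (\<Prod>i<n. g i)"
proof -
  have "det (mat n n (\<lambda>(i, j). if i = j then g i else 0))
      = prod_list (diag_mat (mat n n (\<lambda>(i, j). if i = j then g i else 0)))"
    by (rule det_upper_triangular[of _ n]) (auto simp: upper_triangular_def)
  also have "\<dots> = (\<Prod>i<n. g i)"
    by (simp add: diag_mat_def prod.list_conv_set_nth lessThan_atLeast0)
  finally show ?thesis .
qed

lemma det_four_block_mat_one_lower_right:
  fixes X :: "'a :: idom mat"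
  assumes X: "X \<in> carrier_mat m m" and Q: "Q \<in> carrier_mat m k" and P: "P \<in> carrier_mat k m"
  shows "det (four_block_mat X Q P (1\<^sub>m k)) = det (X - Q * P)"
proof -
  let ?L = "four_block_mat (1\<^sub>m m) (0\<^sub>m m k) (- P) (1\<^sub>m k)"
  have L: "?L \<in> carrier_mat (m + k) (m + k)" using P by auto
  have "det ?L = 1"
    by (subst det_four_block_mat_upper_right_zero[of _ m _ k]) (use P in auto)
  then have "det (four_block_mat X Q P (1\<^sub>m k)) = det (four_block_mat X Q P (1\<^sub>m k) * ?L)"
    using det_mult[OF _ L, of "four_block_mat X Q P (1\<^sub>m k)"] X by simp
  also have "four_block_mat X Q P (1\<^sub>m k) * ?L
    = four_block_mat (X * 1\<^sub>m m + Q * - P) (X * 0\<^sub>m m k + Q * 1\<^sub>m k)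
        (P * 1\<^sub>m m + 1\<^sub>m k * - P) (P * 0\<^sub>m m k + 1\<^sub>m k * 1\<^sub>m k)"
    by (rule mult_four_block_mat) (use X Q P in auto)
  also have "\<dots> = four_block_mat (X - Q * P) Q (0\<^sub>m k m) (1\<^sub>m k)"
    by (intro cong_four_block_mat eq_matI) (use X Q P in \<open>auto simp: scalar_prod_def\<close>)
  also have "det \<dots> = det (X - Q * P)"
    by (subst det_four_block_mat_lower_left_zero[of _ m _ k]) (use X Q P in auto)
  finally show ?thesis .
qed

lemma det_minus_mult_intertwined:
  fixes X :: "'a :: idom mat"
  assumes X: "X \<in> carrier_mat m m" and Q: "Q \<in> carrier_mat m k" and P: "P \<in> carrier_mat k m"
    and W: "W \<in> carrier_mat k k" and XQ: "X * Q = Q * W"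
  shows "det (X - Q * P) * det W = det X * det (W - P * Q)"
proof -
  let ?M = "four_block_mat X Q P (1\<^sub>m k)"
  let ?R = "four_block_mat (1\<^sub>m m) (- Q) (0\<^sub>m k m) W"
  have M: "?M \<in> carrier_mat (m + k) (m + k)" and R: "?R \<in> carrier_mat (m + k) (m + k)"
    using X Q W by auto
  have "det (X - Q * P) * det W = det ?M * det ?R"
    using det_four_block_mat_one_lower_right[OF X Q P]
      det_four_block_mat_lower_left_zero[of "1\<^sub>m m" m "- Q" k _ W] Q W by simp
  also have "\<dots> = det (?M * ?R)"
    by (rule det_mult[OF M R, symmetric])
  also have "?M * ?R = four_block_mat (X * 1\<^sub>m m + Q * 0\<^sub>m k m) (X * - Q + Q * W)
      (P * 1\<^sub>m m + 1\<^sub>m k * 0\<^sub>m k m) (P * - Q + 1\<^sub>m k * W)"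
    by (rule mult_four_block_mat) (use X Q P W in auto)
  also have "\<dots> = four_block_mat X (0\<^sub>m m k) P (W - P * Q)"
    using XQ
    by (intro cong_four_block_mat eq_matI) (use X Q P W in \<open>auto simp: scalar_prod_def\<close>)
  also have "det \<dots> = det X * det (W - P * Q)"
    by (rule det_four_block_mat_upper_right_zero) (use X P W Q in auto)
  finally show ?thesis .
qed

definition fibre_card :: "nat \<Rightarrow> (nat \<Rightarrow> nat) \<Rightarrow> nat \<Rightarrow> nat" where
  "fibre_card m c j = card {p. p < m \<and> c p = j}"

lemma prod_fibres:
  assumes "c ` {..<m} \<subseteq> {..<k}"
  shows "(\<Prod>p<m. g (c p)) = (\<Prod>j<k. g j ^ fibre_card m c j)"
proof -
  have "(\<Prod>p<m. g (c p)) = (\<Prod>j<k. \<Prod>p\<in>{p \<in> {..<m}. c p = j}. g (c p))"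
    by (rule prod.group[symmetric]) (use assms in auto)
  also have "\<dots> = (\<Prod>j<k. g j ^ fibre_card m c j)"
    by (intro prod.cong refl) (simp add: fibre_card_def)
  finally show ?thesis .
qed

lemma fibre_card_pos:
  assumes "j \<in> c ` {..<m}"
  shows "fibre_card m c j > 0"
  using assms unfolding fibre_card_def by (auto simp: card_gt_0_iff)

definition blowup_mat ::
    "nat \<Rightarrow> (nat \<Rightarrow> nat) \<Rightarrow> (nat \<Rightarrow> nat \<Rightarrow> 'a) \<Rightarrow> (nat \<Rightarrow> 'a) \<Rightarrow> 'a :: comm_ring_1 mat" where
  "blowup_mat m c B a = mat m m (\<lambda>(p, q). B (c p) (c q) + (if p = q then a (c p) else 0))"

definition quotient_mat ::
    "nat \<Rightarrow> (nat \<Rightarrow> nat) \<Rightarrow> nat \<Rightarrow> (nat \<Rightarrow> nat \<Rightarrow> 'a) \<Rightarrow> (nat \<Rightarrow> 'a) \<Rightarrow> 'a :: comm_ring_1 mat" where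
  "quotient_mat m c k B a =
     mat k k (\<lambda>(i, j). of_nat (fibre_card m c j) * B i j + (if i = j then a i else 0))"

lemma char_poly_blowup_mat_mult:
  fixes B :: "nat \<Rightarrow> nat \<Rightarrow> 'a :: idom"
  assumes c: "c ` {..<m} \<subseteq> {..<k}"
  shows "char_poly (blowup_mat m c B a) * (\<Prod>j<k. [:- a j, 1:])
    = (\<Prod>j<k. [:- a j, 1:] ^ fibre_card m c j) * char_poly (quotient_mat m c k B a)"
proof -
  define X where "X = mat m m (\<lambda>(p, q). if p = q then [:- a (c p), 1:] else 0)"
  define W where "W = mat k k (\<lambda>(i, j). if i = j then [:- a i, 1:] else 0)"
  define Q :: "'a poly mat" where "Q = mat m k (\<lambda>(p, j). if c p = j then 1 else 0)"
  define P where "P = mat k m (\<lambda>(i, q). [:B i (c q):])"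
  have carrier: "X \<in> carrier_mat m m" "W \<in> carrier_mat k k" "Q \<in> carrier_mat m k"
    "P \<in> carrier_mat k m"
    by (simp_all add: X_def W_def Q_def P_def)
  have ck: "c p < k" if "p < m" for p
    using c that by blast
  have smult_indicator: "Polynomial.smult b (if P then 1 else 0) = (if P then [:b:] else 0)"
    for b :: 'a and P
    by simp
  have "char_poly_matrix (blowup_mat m c B a) = X - Q * P"
    by (rule eq_matI) (auto simp: char_poly_matrix_def blowup_mat_def X_def Q_def P_def
        scalar_prod_def smult_indicator ck)
  moreover have "char_poly_matrix (quotient_mat m c k B a) = W - P * Q"
  proof (rule eq_matI)
    fix i j assume "i < dim_row (W - P * Q)" "j < dim_col (W - P * Q)"
    then have ij: "i < k" "j < k" using carrier by auto
    have "(P * Q) $$ (i, j) = (\<Sum>q \<in> {0..<m} \<inter> {q. c q = j}. [:B i j:])"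
      using ij carrier
      by (simp add: P_def Q_def scalar_prod_def if_distrib[of "\<lambda>x. _ * x"] sum.If_cases)
    also have "{0..<m} \<inter> {q. c q = j} = {q. q < m \<and> c q = j}"
      by auto
    also have "(\<Sum>q \<in> {q. q < m \<and> c q = j}. [:B i j:]) = [:of_nat (fibre_card m c j) * B i j:]"
      by (simp add: fibre_card_def of_nat_poly)
    finally show "char_poly_matrix (quotient_mat m c k B a) $$ (i, j) = (W - P * Q) $$ (i, j)"
      using ij carrier by (simp add: char_poly_matrix_def quotient_mat_def W_def)
  qed (use carrier in \<open>auto simp: char_poly_matrix_def quotient_mat_def\<close>)
  moreover have "X * Q = Q * W"
    unfolding X_def W_def mult_diagonal_mat_left[OF carrier(3)] mult_diagonal_mat_right[OF carrier(3)]
    by (rule eq_matI) (auto simp: Q_def)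
  moreover have "det W = (\<Prod>j<k. [:- a j, 1:])"
    unfolding W_def det_diagonal_mat ..
  moreover have "det X = (\<Prod>j<k. [:- a j, 1:] ^ fibre_card m c j)"
    unfolding X_def det_diagonal_mat using c by (rule prod_fibres)
  ultimately show ?thesis
    unfolding char_poly_def using det_minus_mult_intertwined[OF carrier(1,3,4,2)] by simp
qed

lemma char_poly_blowup_mat:
  fixes B :: "nat \<Rightarrow> nat \<Rightarrow> 'a :: idom"
  assumes c: "c ` {..<m} = {..<k}"
  shows "char_poly (blowup_mat m c B a)
    = char_poly (quotient_mat m c k B a) * (\<Prod>j<k. [:- a j, 1:] ^ (fibre_card m c j - 1))"
proof -
  have "(\<Prod>j<k. [:- a j, 1:] ^ fibre_card m c j)
      = (\<Prod>j<k. [:- a j, 1:]) * (\<Prod>j<k. [:- a j, 1:] ^ (fibre_card m c j - 1))"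
    unfolding prod.distrib[symmetric]
    by (intro prod.cong refl) (metis c fibre_card_pos power_eq_if neq0_conv)
  moreover have "(\<Prod>j<k. [:- a j, 1:]) \<noteq> 0"
    by simp
  ultimately show ?thesis
    using char_poly_blowup_mat_mult[of c m k B a] c by (simp add: ac_simps)
qed

lemma real_sqrt_two_mult_square:
  fixes x :: real
  assumes "0 \<le> x"
  shows "sqrt (2 * x ^ 2) = sqrt 2 * x"
  using assms by (simp add: real_sqrt_mult)

lemma super_adj_iff_classes_adj:
  "super_adj R E u w \<longleftrightarrow> u \<noteq> w \<and> ((u, w) \<in> R \<or> classes_adj E (R `` {u}) (R `` {w}))"
  by (auto simp: super_adj_def classes_adj_def)

lemma degree_super_adj_eq:
  assumes R: "equiv V R" and uw: "(u, w) \<in> R"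
  shows "degree V (super_adj R E) u = degree V (super_adj R E) w"
proof -
  define closed_nbhd where
    "closed_nbhd C = {y \<in> V. y \<in> C \<or> classes_adj E C (R `` {y})}" for C
  have "degree V (super_adj R E) x = card (closed_nbhd (R `` {x})) - 1" if "x \<in> V" for x
  proof -
    have "{y \<in> V. super_adj R E x y} = closed_nbhd (R `` {x}) - {x}"
      by (auto simp: closed_nbhd_def super_adj_iff_classes_adj)
    moreover have "x \<in> closed_nbhd (R `` {x})"
      using that equiv_class_self[OF R] by (simp add: closed_nbhd_def)
    ultimately show ?thesis
      by (simp add: degree_def card_Diff_singleton)
  qed
  moreover have "u \<in> V" "w \<in> V" "R `` {u} = R `` {w}"
    using uw R equiv_class_eq_iff by fastforce+
  ultimately show ?thesis by simp
qed

lemma quotient_eq_class_iff: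
  assumes "equiv A r" and "X \<in> A // r" and "x \<in> A"
  shows "X = r `` {x} \<longleftrightarrow> x \<in> X"
proof -
  obtain a where a: "X = r `` {a}" "a \<in> A"
    using assms(2) by (rule quotientE)
  show ?thesis
    using equiv_class_eq_iff[OF assms(1), of a x] assms(3) a by auto
qed

locale enumerated_partition =
  fixes V :: "'a set" and R :: "('a \<times> 'a) set" and vs :: "'a list" and Cs :: "'a set list"
  assumes equiv: "equiv V R" and distinct_vs: "distinct vs" and set_vs: "set vs = V"
    and distinct_Cs: "distinct Cs" and set_Cs: "set Cs = V // R"
begin

definition class_index :: "nat \<Rightarrow> nat" where
  "class_index p = inv_into {..<length Cs} (nth Cs) (R `` {vs ! p})"

lemma nth_vs_mem: "p < length vs \<Longrightarrow> vs ! p \<in> V"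
  using set_vs nth_mem by blast

lemma nth_Cs_mem: "j < length Cs \<Longrightarrow> Cs ! j \<in> V // R"
  using set_Cs nth_mem by blast

lemma class_index:
  assumes "p < length vs"
  shows "class_index p < length Cs" and "Cs ! class_index p = R `` {vs ! p}"
proof -
  have bij: "bij_betw (nth Cs) {..<length Cs} (set Cs)"
    by (rule bij_betw_nth[OF distinct_Cs refl refl])
  have cls: "R `` {vs ! p} \<in> set Cs"
    using nth_vs_mem[OF assms] set_Cs by (auto intro: quotientI)
  show "class_index p < length Cs"
    using bij_betw_apply[OF bij_betw_inv_into[OF bij] cls] by (simp add: class_index_def)
  show "Cs ! class_index p = R `` {vs ! p}"
    using bij_betw_inv_into_right[OF bij cls] by (simp add: class_index_def)
qed

lemma class_index_eq_iff:
  assumes p: "p < length vs" and j: "j < length Cs"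
  shows "class_index p = j \<longleftrightarrow> vs ! p \<in> Cs ! j"
proof -
  have "class_index p = j \<longleftrightarrow> Cs ! j = Cs ! class_index p"
    using class_index(1)[OF p] j distinct_Cs by (auto simp: nth_eq_iff_index_eq)
  also have "\<dots> \<longleftrightarrow> vs ! p \<in> Cs ! j"
    unfolding class_index(2)[OF p]
    by (rule quotient_eq_class_iff[OF equiv nth_Cs_mem[OF j] nth_vs_mem[OF p]])
  finally show ?thesis .
qed

lemma rel_iff_class_index_eq:
  assumes p: "p < length vs" and q: "q < length vs"
  shows "(vs ! p, vs ! q) \<in> R \<longleftrightarrow> class_index p = class_index q"
proof -
  have "(vs ! p, vs ! q) \<in> R \<longleftrightarrow> Cs ! class_index p = Cs ! class_index q"
    unfolding class_index(2)[OF p] class_index(2)[OF q]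
    by (rule eq_equiv_class_iff[OF equiv nth_vs_mem[OF p] nth_vs_mem[OF q], symmetric])
  also have "\<dots> \<longleftrightarrow> class_index p = class_index q"
    using class_index(1)[OF p] class_index(1)[OF q] distinct_Cs by (simp add: nth_eq_iff_index_eq)
  finally show ?thesis .
qed

lemma nth_Cs_eq_image:
  assumes j: "j < length Cs"
  shows "Cs ! j = nth vs ` {p. p < length vs \<and> class_index p = j}"
proof (intro equalityI subsetI)
  fix u assume u: "u \<in> Cs ! j"
  then have "u \<in> set vs"
    using in_quotient_imp_subset[OF equiv nth_Cs_mem[OF j]] set_vs by blast
  then obtain p where "p < length vs" "vs ! p = u"
    by (metis in_set_conv_nth)
  then show "u \<in> nth vs ` {p. p < length vs \<and> class_index p = j}"
    using class_index_eq_iff[OF _ j] u by auto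
qed (use class_index_eq_iff[OF _ j] in auto)

lemma class_index_image: "class_index ` {..<length vs} = {..<length Cs}"
proof (intro antisym subsetI)
  fix j assume "j \<in> {..<length Cs}"
  then have j: "j < length Cs" by simp
  then have "Cs ! j \<noteq> {}"
    using in_quotient_imp_non_empty[OF equiv nth_Cs_mem] by blast
  then show "j \<in> class_index ` {..<length vs}"
    unfolding nth_Cs_eq_image[OF j] by auto
qed (use class_index in auto)

lemma fibre_card_class_index:
  assumes j: "j < length Cs"
  shows "fibre_card (length vs) class_index j = card (Cs ! j)"
proof -
  have "inj_on (nth vs) {p. p < length vs \<and> class_index p = j}"
    using distinct_vs by (auto simp: inj_on_def nth_eq_iff_index_eq)
  then show ?thesis
    unfolding fibre_card_def nth_Cs_eq_image[OF j] by (rule card_image[symmetric])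
qed

lemma degree_super_adj_same_class:
  assumes "i < length Cs" and "x \<in> Cs ! i" and "y \<in> Cs ! i"
  shows "degree V (super_adj R E) x = degree V (super_adj R E) y"
  using degree_super_adj_eq[OF equiv] in_quotient_imp_in_rel[OF equiv nth_Cs_mem[OF assms(1)]] assms
  by blast

definition class_degree :: "('a \<Rightarrow> 'a \<Rightarrow> bool) \<Rightarrow> nat \<Rightarrow> real" where
  "class_degree E i = real (degree V (super_adj R E) (SOME x. x \<in> Cs ! i))"

lemma degree_nth_vs:
  assumes p: "p < length vs"
  shows "real (degree V (super_adj R E) (vs ! p)) = class_degree E (class_index p)"
proof -
  note cp = class_index(1)[OF p]
  have "Cs ! class_index p \<noteq> {}"
    using in_quotient_imp_non_empty[OF equiv nth_Cs_mem[OF cp]] .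
  then have some_mem: "(SOME x. x \<in> Cs ! class_index p) \<in> Cs ! class_index p"
    by (simp add: some_in_eq)
  have vs_mem: "vs ! p \<in> Cs ! class_index p"
    using class_index_eq_iff[OF p cp] by simp
  show ?thesis
    unfolding class_degree_def using degree_super_adj_same_class[OF cp vs_mem some_mem] by (rule arg_cong)
qed

text \<open>Distinct vertices of one class are adjacent in the super graph, so the weight of a class
  with itself is \<open>sqrt 2\<close> times its degree; the diagonal shift \<open>- sqrt 2 * class_degree E i\<close>
  of the blow-up restores the zero diagonal of the Sombor matrix.\<close>

definition class_weight :: "('a \<Rightarrow> 'a \<Rightarrow> bool) \<Rightarrow> nat \<Rightarrow> nat \<Rightarrow> real" where
  "class_weight E i j =
     (if i = j \<or> classes_adj E (Cs ! i) (Cs ! j)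
      then sqrt (class_degree E i ^ 2 + class_degree E j ^ 2) else 0)"

lemma sombor_matrix_super_adj:
  "sombor_matrix V (super_adj R E) vs
    = blowup_mat (length vs) class_index (class_weight E) (\<lambda>i. - (sqrt 2 * class_degree E i))"
  (is "_ = ?B")
proof (rule eq_matI)
  fix p q assume "p < dim_row ?B" and "q < dim_col ?B"
  then have p: "p < length vs" and q: "q < length vs"
    by (simp_all add: blowup_mat_def)
  have "super_adj R E (vs ! p) (vs ! q) \<longleftrightarrow> p \<noteq> q \<and> (class_index p = class_index q
      \<or> classes_adj E (Cs ! class_index p) (Cs ! class_index q))"
    unfolding super_adj_iff_classes_adj rel_iff_class_index_eq[OF p q]
      class_index(2)[OF p, symmetric] class_index(2)[OF q, symmetric]
    using p q distinct_vs by (simp add: nth_eq_iff_index_eq)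
  moreover have "0 \<le> class_degree E (class_index p)"
    by (simp add: class_degree_def)
  ultimately show "sombor_matrix V (super_adj R E) vs $$ (p, q) = ?B $$ (p, q)"
    using p q degree_nth_vs[OF p] degree_nth_vs[OF q]
    by (cases "p = q") (simp_all add: sombor_matrix_def blowup_mat_def class_weight_def
        real_sqrt_two_mult_square)
qed (simp_all add: sombor_matrix_def blowup_mat_def)

lemma quot_matrix_eq_quotient_mat:
  "quot_matrix E Cs (class_degree E)
    = quotient_mat (length vs) class_index (length Cs) (class_weight E)
        (\<lambda>i. - (sqrt 2 * class_degree E i))"
  (is "_ = ?N")
proof (rule eq_matI)
  fix i j assume "i < dim_row ?N" and "j < dim_col ?N"
  then have i: "i < length Cs" and j: "j < length Cs"
    by (simp_all add: quotient_mat_def)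
  have "0 \<le> class_degree E i"
    by (simp add: class_degree_def)
  then show "quot_matrix E Cs (class_degree E) $$ (i, j) = ?N $$ (i, j)"
    using i j
    by (cases "i = j") (simp_all add: quot_matrix_def quotient_mat_def class_weight_def
        fibre_card_class_index real_sqrt_two_mult_square algebra_simps)
qed (simp_all add: quot_matrix_def quotient_mat_def)

end

theorem theorem3p4:
  fixes V :: "'a set" and E :: "'a \<Rightarrow> 'a \<Rightarrow> bool" and R :: "('a \<times> 'a) set"
    and vs :: "'a list" and Cs :: "'a set list"
  assumes "simple_graph V E"
    and "connected_graph V E"
    and "equiv V R"
    and "distinct vs" and "set vs = V"
    and "distinct Cs" and "set Cs = V // R"
  defines "d \<equiv> (\<lambda>i. real (degree V (super_adj R E) (SOME x. x \<in> Cs ! i)))"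
  shows "(\<forall>i < length Cs. \<forall>x \<in> Cs ! i. \<forall>y \<in> Cs ! i.
            degree V (super_adj R E) x = degree V (super_adj R E) y)
       \<and> char_poly (sombor_matrix V (super_adj R E) vs)
         = char_poly (quot_matrix E Cs d)
           * (\<Prod>i < length Cs. [: d i * sqrt 2, 1 :] ^ (card (Cs ! i) - 1))"
proof -
  interpret enumerated_partition V R vs Cs
    using assms(3-7) by unfold_locales
  have d: "d = class_degree E"
    by (simp add: d_def class_degree_def fun_eq_iff)
  let ?a = "\<lambda>i. - (sqrt 2 * d i)"
  have "char_poly (sombor_matrix V (super_adj R E) vs)
    = char_poly (quotient_mat (length vs) class_index (length Cs) (class_weight E) ?a)
      * (\<Prod>i < length Cs. [:- ?a i, 1:] ^ (fibre_card (length vs) class_index i - 1))"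
    unfolding d sombor_matrix_super_adj by (rule char_poly_blowup_mat[OF class_index_image])
  also have "\<dots> = char_poly (quot_matrix E Cs d)
      * (\<Prod>i < length Cs. [: d i * sqrt 2, 1 :] ^ (card (Cs ! i) - 1))"
    unfolding d quot_matrix_eq_quotient_mat
    by (intro arg_cong[where f = "(*) _"] prod.cong) (simp_all add: fibre_card_class_index mult.commute)
  finally show ?thesis
    using degree_super_adj_same_class by blast
qed

end
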